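(* Let $G$ be a graph on $n$ vertices such that $G\neq K_n$ and $G\ne \overline{K_n}$ (i.e. $G$ is neither complete nor edgeless). Then \[ \operatorname{rank}(A_G+I)\cdot\operatorname{rank}(A_{\overline G}+I)\ \ge\ 2n. \] Moreover, equality holds if and only if $G$ or $\overline{G}$ is (isomorphic to) $K_{a,n-a}$ for some integer $a$ with $1\le a\le\lfloor n/2\rfloor$.
   Context: All graphs are simple (undirected, no loops or multiple edges). $A_G$ denotes the $n\times n$ adjacency matrix of $G$, $\overline{G}$ the complement of $G$, $I=I_n$ the $n\times n$ identity matrix, and $\operatorname{rank}$ is the rank over $\mathbb{R}$. $K_n$ is the complete graph on $n$ vertices, $\overline{K_n}$ the edgeless graph on $n$ vertices, and $K_{a,b}$ the complete bipartite graph with part sizes $a$ and $b$. *)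

theory Defs
  imports "HOL-Analysis.Analysis"
begin

text \<open>A simple graph on the finite vertex type 'n (so n = CARD('n)) is given by a
symmetric irreflexive adjacency relation.\<close>

definition simple_graph :: "('n \<Rightarrow> 'n \<Rightarrow> bool) \<Rightarrow> bool" where
  "simple_graph E \<longleftrightarrow> (\<forall>i j. E i j \<longleftrightarrow> E j i) \<and> (\<forall>i. \<not> E i i)"

definition adj_matrix :: "('n::finite \<Rightarrow> 'n \<Rightarrow> bool) \<Rightarrow> real^'n^'n" where
  "adj_matrix E = (\<chi> i j. if E i j then 1 else 0)"

definition complement_graph :: "('n \<Rightarrow> 'n \<Rightarrow> bool) \<Rightarrow> 'n \<Rightarrow> 'n \<Rightarrow> bool" where
  "complement_graph E = (\<lambda>i j. i \<noteq> j \<and> \<not> E i j)"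

definition is_complete :: "('n \<Rightarrow> 'n \<Rightarrow> bool) \<Rightarrow> bool" where
  "is_complete E \<longleftrightarrow> (\<forall>i j. i \<noteq> j \<longrightarrow> E i j)"

definition is_edgeless :: "('n \<Rightarrow> 'n \<Rightarrow> bool) \<Rightarrow> bool" where
  "is_edgeless E \<longleftrightarrow> (\<forall>i j. \<not> E i j)"

text \<open>The graph E (on the vertex type 'n) is isomorphic to K_{a, n-a}: there is a set S
of a vertices such that the edges are exactly the pairs with one end in S and the other
outside S.\<close>

definition iso_complete_bipartite :: "('n::finite \<Rightarrow> 'n \<Rightarrow> bool) \<Rightarrow> nat \<Rightarrow> bool" where
  "iso_complete_bipartite E a \<longleftrightarrow>
     (\<exists>S::'n set. card S = a \<and> (\<forall>i j. E i j \<longleftrightarrow> ((i \<in> S) \<noteq> (j \<in> S))))"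

end

theory Submission
  imports Defs
begin

(* Write X = A_G + I and Y = A_Gbar + I. Their sum I + J is invertible with inverse
   M = I - J/(n+1), so the column spaces of X and Y span R^n, both contain the range of
   P = X M Y = Y M X, and rank X + rank Y >= n + rank P.
   The quadratic form of P is z'Xz - (Xz)'M(Xz) = z'Yz - (Yz)'M(Yz) with M positive
   semidefinite. An induced path a - b - c gives z = e_a - e_b + e_c with z'Xz = -1.
   One of G, Gbar contains an induced path; if the other does not, it is a disjoint union
   of cliques, and z_v = 1/|N[v]| gives Xz = 1 and a positive value of the form of P.
   Either way P has a nonsingular 2 x 2 minor, so rank X + rank Y >= n + 2. As both ranks
   are at most n, their product is at least 2n, with equality iff one of them is 2; and
   the 3 x 3 principal minors show that rank (A_G + I) <= 2 makes a noncomplete G the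
   disjoint union of two cliques, i.e. Gbar = K_{a,n-a}. *)

lemma matrix_add_rdistrib: "(A + B) ** C = A ** C + B ** (C :: 'a::semiring_1^'p^'n)"
  by (simp add: matrix_matrix_mult_def vec_eq_iff sum.distrib distrib_right)

lemma inner_matrix_symmetric:
  fixes A :: "real^'n^'n"
  assumes "transpose A = A"
  shows "x \<bullet> (A *v y) = (A *v x) \<bullet> y"
  by (metis assms dot_lmul_matrix transpose_matrix_vector)

lemma rank_ge_of_det_minor:
  fixes A :: "real^'n^'m" and T :: "real^'m^'k" and S :: "real^'n^'k"
  assumes "det (\<chi> a b. T $ a \<bullet> (A *v S $ b)) \<noteq> 0"
  shows "CARD('k) \<le> rank A"
proof -
  have "(\<chi> a b. T $ a \<bullet> (A *v S $ b)) = T ** A ** transpose S"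
    by (simp add: vec_eq_iff matrix_vector_mul_component matrix_matrix_mult_def inner_vec_def
        transpose_def sum_distrib_left sum_distrib_right mult_ac)
      (use sum.swap in fastforce)
  then have "CARD('k) = rank (T ** A ** transpose S)"
    using assms det_eq_0_rank rank_bound by (metis le_antisym min.bounded_iff not_le)
  also have "\<dots> \<le> rank A"
    by (metis le_trans rank_mul_le_left rank_mul_le_right)
  finally show ?thesis .
qed

lemma rank_ge_2_of_minor:
  fixes A :: "real^'n^'m"
  assumes "(x \<bullet> (A *v u)) * (y \<bullet> (A *v v)) - (x \<bullet> (A *v v)) * (y \<bullet> (A *v u)) \<noteq> 0"
  shows "2 \<le> rank A"
  using rank_ge_of_det_minor[of "vector [x, y] :: real^'m^2" A "vector [u, v]"] assms
  by (simp add: det_2)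

lemma psd_matrix_Cauchy_Schwarz:
  fixes M :: "real^'n^'n"
  assumes sym: "transpose M = M" and psd: "\<And>v. 0 \<le> v \<bullet> (M *v v)"
  shows "(a \<bullet> (M *v b))\<^sup>2 \<le> (a \<bullet> (M *v a)) * (b \<bullet> (M *v b))"
proof -
  let ?q = "\<lambda>v. v \<bullet> (M *v v)"
  have expand: "?q (a + t *\<^sub>R b) = ?q a + 2 * t * (a \<bullet> (M *v b)) + t\<^sup>2 * ?q b" for t
    using inner_matrix_symmetric[OF sym, of b a] inner_commute[of "M *v b" a]
    by (simp add: matrix_vector_right_distrib matrix_vector_mult_scaleR inner_add_left
        inner_add_right power2_eq_square algebra_simps)
  show ?thesis
  proof (cases "?q b = 0")
    case True
    have "a \<bullet> (M *v b) = 0"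
    proof (rule ccontr)
      assume nz: "a \<bullet> (M *v b) \<noteq> 0"
      have "0 \<le> ?q (a + (- (?q a + 1) / (2 * (a \<bullet> (M *v b)))) *\<^sub>R b)" by (rule psd)
      also have "\<dots> = -1" unfolding expand using nz True by (simp add: field_simps)
      finally show False by simp
    qed
    then show ?thesis using psd[of a] psd[of b] by simp
  next
    case False
    then have pos: "?q b > 0" using psd[of b] by simp
    have "0 \<le> ?q (a + (- (a \<bullet> (M *v b)) / ?q b) *\<^sub>R b)" by (rule psd)
    also have "\<dots> = ?q a - (a \<bullet> (M *v b))\<^sup>2 / ?q b"
      unfolding expand using pos by (simp add: field_simps power2_eq_square)
    finally show ?thesis using pos by (simp add: field_simps)
  qed
qed

lemma sandwich_eq_mirror:
  fixes X Y M :: "real^'n^'n"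
  assumes "(X + Y) ** M = mat 1" "M ** (X + Y) = mat 1"
  shows "X ** M ** Y = Y ** M ** X"
proof -
  have "X ** M ** Y + X ** M ** X = X ** (M ** (X + Y))"
    by (simp add: matrix_add_ldistrib matrix_mul_assoc add.commute)
  moreover have "Y ** M ** X + X ** M ** X = ((X + Y) ** M) ** X"
    by (simp add: matrix_add_rdistrib add.commute)
  ultimately have "X ** M ** Y + X ** M ** X = Y ** M ** X + X ** M ** X"
    using assms by simp
  then show ?thesis by simp
qed

lemma sandwich_eq_diff:
  fixes X Y M :: "real^'n^'n"
  assumes "M ** (X + Y) = mat 1"
  shows "X ** M ** Y = X - X ** M ** X"
proof -
  have "X ** M ** Y + X ** M ** X = X ** (M ** (X + Y))"
    by (simp add: matrix_add_ldistrib matrix_mul_assoc add.commute)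
  then show ?thesis using assms by (simp add: eq_diff_eq)
qed

lemma rank_add_rank_ge_sandwich:
  fixes X Y M :: "real^'n^'n"
  assumes "(X + Y) ** M = mat 1" "M ** (X + Y) = mat 1"
  shows "CARD('n) + rank (X ** M ** Y) \<le> rank X + rank Y"
proof -
  let ?R = "\<lambda>A :: real^'n^'n. range ((*v) A)"
  have subspace: "subspace (?R A)" for A
    by (simp add: subspace_UNIV linear_subspace_image)
  have "z \<in> {a + b |a b. a \<in> ?R X \<and> b \<in> ?R Y}" for z
  proof -
    have "X *v (M *v z) + Y *v (M *v z) = z"
      by (simp add: matrix_vector_mul_assoc assms(1) flip: matrix_vector_mult_add_rdistrib
          matrix_add_rdistrib)
    then show ?thesis by (smt (verit) mem_Collect_eq rangeI)
  qed
  then have sums: "{a + b |a b. a \<in> ?R X \<and> b \<in> ?R Y} = UNIV" by blast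
  have "X ** M ** Y *v z \<in> ?R X \<inter> ?R Y" for z
  proof -
    have "X ** M ** Y *v z = X *v (M ** Y *v z)" "X ** M ** Y *v z = Y *v (M ** X *v z)"
      by (simp_all add: matrix_vector_mul_assoc matrix_mul_assoc sandwich_eq_mirror[OF assms])
    then show ?thesis by (metis IntI rangeI)
  qed
  then have "?R (X ** M ** Y) \<subseteq> ?R X \<inter> ?R Y" by blast
  then have "rank (X ** M ** Y) \<le> dim (?R X \<inter> ?R Y)"
    by (simp add: rank_dim_range dim_subset)
  moreover have "dim (UNIV :: (real^'n) set) + dim (?R X \<inter> ?R Y) = rank X + rank Y"
    using dim_sums_Int[OF subspace[of X] subspace[of Y]] by (simp add: sums rank_dim_range)
  ultimately show ?thesis by simp
qed

lemma inner_sandwich: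
  fixes X Y M :: "real^'n^'n"
  assumes "transpose X = X"
  shows "z \<bullet> ((X ** M ** Y) *v w) = (X *v z) \<bullet> (M *v (Y *v w))"
  by (simp add: inner_matrix_symmetric[OF assms] flip: matrix_vector_mul_assoc)

lemma rank_add_rank_ge_card_plus_2:
  fixes X Y M :: "real^'n^'n"
  assumes symX: "transpose X = X" and symY: "transpose Y = Y" and symM: "transpose M = M"
    and inv: "(X + Y) ** M = mat 1" "M ** (X + Y) = mat 1"
    and psd: "\<And>v. 0 \<le> v \<bullet> (M *v v)"
    and w: "w \<bullet> (Y *v w) < 0"
    and z: "z \<bullet> (X *v z) < 0 \<or> (X *v z) \<bullet> (M *v (X *v z)) < z \<bullet> (X *v z)"
  shows "CARD('n) + 2 \<le> rank X + rank Y"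
proof -
  let ?P = "X ** M ** Y" and ?x = "X *v z" and ?y = "Y *v w"
  have inv': "M ** (Y + X) = mat 1" using inv(2) by (simp add: add.commute)
  have mirror: "?P = Y ** M ** X" by (rule sandwich_eq_mirror[OF inv])
  have Pzz: "z \<bullet> (?P *v z) = z \<bullet> ?x - ?x \<bullet> (M *v ?x)"
    by (simp add: sandwich_eq_diff[OF inv(2)] matrix_vector_mult_diff_rdistrib inner_diff_right
        inner_sandwich[OF symX])
  have Pww: "w \<bullet> (?P *v w) = w \<bullet> ?y - ?y \<bullet> (M *v ?y)"
    by (simp add: mirror sandwich_eq_diff[OF inv'] matrix_vector_mult_diff_rdistrib inner_diff_right
        inner_sandwich[OF symY])
  have Pzw: "z \<bullet> (?P *v w) = ?x \<bullet> (M *v ?y)" by (rule inner_sandwich[OF symX])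
  have Pwz: "w \<bullet> (?P *v z) = ?x \<bullet> (M *v ?y)"
    by (simp add: mirror inner_sandwich[OF symY] inner_matrix_symmetric[OF symM, of ?y]
        inner_commute[of "M *v ?y"])
  have a: "0 \<le> ?x \<bullet> (M *v ?x)" and b: "0 \<le> ?y \<bullet> (M *v ?y)" by (rule psd)+
  have c: "(?x \<bullet> (M *v ?y))\<^sup>2 \<le> (?x \<bullet> (M *v ?x)) * (?y \<bullet> (M *v ?y))"
    by (rule psd_matrix_Cauchy_Schwarz[OF symM psd])
  \<comment> \<open>The minor is positive if both diagonal entries are negative (Cauchy-Schwarz bounds the
    off-diagonal ones) and negative if they have opposite signs.\<close>
  have "(z \<bullet> (?P *v z)) * (w \<bullet> (?P *v w)) - (z \<bullet> (?P *v w)) * (w \<bullet> (?P *v z)) \<noteq> 0"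
    using z
  proof
    assume "z \<bullet> ?x < 0"
    then have "0 < (z \<bullet> ?x) * (w \<bullet> ?y)" using w by (simp add: mult_neg_neg)
    moreover have "0 \<le> - (z \<bullet> ?x) * (?y \<bullet> (M *v ?y))" "0 \<le> - (w \<bullet> ?y) * (?x \<bullet> (M *v ?x))"
      using \<open>z \<bullet> ?x < 0\<close> w a b by (simp_all add: mult_nonpos_nonneg)
    ultimately show ?thesis
      using c unfolding Pzz Pww Pzw Pwz by (simp add: algebra_simps power2_eq_square)
  next
    assume "?x \<bullet> (M *v ?x) < z \<bullet> ?x"
    then have "(z \<bullet> (?P *v z)) * (w \<bullet> (?P *v w)) < 0"
      using w b unfolding Pzz Pww by (simp add: mult_pos_neg)
    then show ?thesis unfolding Pzw Pwz by (smt (verit) zero_le_square)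
  qed
  then have "2 \<le> rank ?P" by (rule rank_ge_2_of_minor)
  then show ?thesis using rank_add_rank_ge_sandwich[OF inv] by simp
qed

(* 1 :: real^'n is the all-ones vector, so 1 \<bullet> z is the coordinate sum of z. *)
definition ones_matrix :: "real^'n::finite^'n" where
  "ones_matrix = (\<chi> i j. 1)"

lemma ones_matrix_mult: "ones_matrix *v z = (1 \<bullet> z) *\<^sub>R 1"
  by (simp add: ones_matrix_def vec_eq_iff matrix_vector_mult_def inner_vec_def one_vec_def)

lemma inner_one_one: "(1 :: real^'n::finite) \<bullet> 1 = real CARD('n)"
  by (simp add: inner_vec_def one_vec_def)

definition id_plus_ones_inv :: "real^'n::finite^'n" where
  "id_plus_ones_inv = mat 1 - (1 / (real CARD('n) + 1)) *\<^sub>R ones_matrix"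

lemma id_plus_ones_inv_mult:
  "id_plus_ones_inv *v z = z - ((1 \<bullet> z) / (real CARD('n) + 1)) *\<^sub>R (1 :: real^'n::finite)"
  by (simp add: id_plus_ones_inv_def matrix_vector_mult_diff_rdistrib ones_matrix_mult
      flip: scaleR_matrix_vector_assoc)

lemma id_plus_ones_inv_inverse:
  "(mat 1 + ones_matrix) ** id_plus_ones_inv = (mat 1 :: real^'n::finite^'n)"
  "id_plus_ones_inv ** (mat 1 + ones_matrix) = (mat 1 :: real^'n^'n)"
proof -
  have "(mat 1 + ones_matrix) *v (id_plus_ones_inv *v z) = z" for z :: "real^'n"
  proof -
    have "1 \<bullet> (id_plus_ones_inv *v z) = (1 \<bullet> z) / (real CARD('n) + 1)"
      unfolding id_plus_ones_inv_mult by (simp add: inner_diff_right inner_one_one field_simps)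
    then show ?thesis
      by (simp add: matrix_vector_mult_add_rdistrib ones_matrix_mult id_plus_ones_inv_mult)
  qed
  then show "(mat 1 + ones_matrix) ** id_plus_ones_inv = (mat 1 :: real^'n^'n)"
    by (simp add: matrix_eq flip: matrix_vector_mul_assoc)
  then show "id_plus_ones_inv ** (mat 1 + ones_matrix) = (mat 1 :: real^'n^'n)"
    by (simp add: matrix_left_right_inverse)
qed

lemma transpose_id_plus_ones_inv: "transpose id_plus_ones_inv = id_plus_ones_inv"
  by (simp add: id_plus_ones_inv_def transpose_def vec_eq_iff ones_matrix_def mat_def)

lemma id_plus_ones_inv_psd: "0 \<le> v \<bullet> (id_plus_ones_inv *v (v :: real^'n::finite))"
proof -
  have "(1 \<bullet> v)\<^sup>2 / (real CARD('n) + 1) \<le> real CARD('n) * (v \<bullet> v) / (real CARD('n) + 1)"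
    using Cauchy_Schwarz_ineq[of 1 v] by (simp add: inner_one_one divide_right_mono)
  also have "\<dots> \<le> v \<bullet> v" by (simp add: field_simps)
  finally show ?thesis
    by (simp add: id_plus_ones_inv_mult inner_diff_right power2_eq_square inner_commute[of v 1])
qed

lemma inner_one_id_plus_ones_inv_one:
  "(1 :: real^'n::finite) \<bullet> (id_plus_ones_inv *v 1) = real CARD('n) / (real CARD('n) + 1)"
  by (simp add: id_plus_ones_inv_mult inner_diff_right inner_one_one field_simps)

lemma simple_graph_complement: "simple_graph F \<Longrightarrow> simple_graph (complement_graph F)"
  by (auto simp: simple_graph_def complement_graph_def)

lemma complement_complement_graph: "simple_graph F \<Longrightarrow> complement_graph (complement_graph F) = F"
  by (auto simp: simple_graph_def complement_graph_def fun_eq_iff)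

lemma not_complete_complement_graph:
  "simple_graph F \<Longrightarrow> \<not> is_edgeless F \<Longrightarrow> \<not> is_complete (complement_graph F)"
  unfolding is_complete_def is_edgeless_def complement_graph_def simple_graph_def by metis

lemma adj_matrix_plus_id_entry:
  "simple_graph F \<Longrightarrow> (adj_matrix F + mat 1) $ i $ j = (if i = j \<or> F i j then 1 else 0)"
  by (auto simp: adj_matrix_def mat_def simple_graph_def)

lemma transpose_adj_matrix_plus_id:
  "simple_graph F \<Longrightarrow> transpose (adj_matrix F + mat 1) = adj_matrix F + mat 1"
  unfolding transpose_def vec_eq_iff vec_lambda_beta adj_matrix_plus_id_entry
  by (auto simp: simple_graph_def)

lemma adj_matrix_plus_id_add_complement:
  "simple_graph F \<Longrightarrow>
     (adj_matrix F + mat 1) + (adj_matrix (complement_graph F) + mat 1) = mat 1 + ones_matrix"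
  by (auto simp: vec_eq_iff adj_matrix_def complement_graph_def ones_matrix_def mat_def
      simple_graph_def)

lemma inner_axis_matrix_axis: "axis i 1 \<bullet> (A *v axis j 1) = (A $ i $ j :: real)"
  by (simp add: inner_axis' matrix_vector_mult_basis column_def)

(* Disjoint unions of cliques, i.e. graphs without an induced path on three vertices. *)
definition cluster_graph :: "('n \<Rightarrow> 'n \<Rightarrow> bool) \<Rightarrow> bool" where
  "cluster_graph F \<longleftrightarrow> (\<forall>a b c. F a b \<longrightarrow> F b c \<longrightarrow> a \<noteq> c \<longrightarrow> F a c)"

lemma induced_path_quadratic_form:
  assumes "simple_graph F" "F a b" "F b c" "a \<noteq> c" "\<not> F a c"
  defines "z \<equiv> axis a 1 - axis b 1 + axis c 1"
  shows "z \<bullet> ((adj_matrix F + mat 1) *v z) = -1"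
proof -
  have "a \<noteq> b" "b \<noteq> c" "F b a" "F c b" "\<not> F c a" using assms by (auto simp: simple_graph_def)
  then show ?thesis using assms
    unfolding z_def matrix_vector_mult_diff_distrib matrix_vector_right_distrib inner_add_left
      inner_diff_left inner_add_right inner_diff_right inner_axis_matrix_axis
      adj_matrix_plus_id_entry[OF assms(1)]
    by simp
qed

lemma not_cluster_graph_negative_form:
  assumes "simple_graph F" "\<not> cluster_graph F"
  shows "\<exists>z. z \<bullet> ((adj_matrix F + mat 1) *v z) < 0"
proof -
  obtain a b c where "F a b" "F b c" "a \<noteq> c" "\<not> F a c"
    using assms(2) by (auto simp: cluster_graph_def)
  from induced_path_quadratic_form[OF assms(1) this] show ?thesis
    by (metis neg_less_0_iff_less zero_less_one)
qed

lemma cluster_graph_closed_neighbourhood: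
  assumes "simple_graph F" "cluster_graph F" "u = v \<or> F v u"
  shows "{w. w = u \<or> F u w} = {w. w = v \<or> F v w}"
  using assms unfolding simple_graph_def cluster_graph_def by blast

lemma cluster_graph_ones_preimage:
  fixes F :: "'n::finite \<Rightarrow> 'n \<Rightarrow> bool"
  assumes "simple_graph F" "cluster_graph F"
  obtains z where "(adj_matrix F + mat 1) *v z = 1" and "1 \<le> 1 \<bullet> z"
proof -
  let ?N = "\<lambda>v. {w. w = v \<or> F v w}"
  define z :: "real^'n" where "z = (\<chi> v. 1 / real (card (?N v)))"
  have row: "(\<Sum>u\<in>?N v. z $ u) = 1" for v
  proof -
    have "(\<Sum>u\<in>?N v. z $ u) = (\<Sum>u\<in>?N v. 1 / real (card (?N v)))"
      by (rule sum.cong) (auto simp: z_def cluster_graph_closed_neighbourhood[OF assms])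
    also have "\<dots> = 1"
      by (simp add: card_gt_0_iff) (use finite_subset in blast)
    finally show ?thesis .
  qed
  have "(adj_matrix F + mat 1) *v z = 1"
  proof -
    have "((adj_matrix F + mat 1) *v z) $ v = (\<Sum>u\<in>UNIV. if u \<in> ?N v then z $ u else 0)" for v
      unfolding matrix_vector_mult_def vec_lambda_beta adj_matrix_plus_id_entry[OF assms(1)]
      by (auto intro: sum.cong)
    then have "((adj_matrix F + mat 1) *v z) $ v = (\<Sum>u\<in>?N v. z $ u)" for v
      by (simp add: sum.If_cases)
    then show ?thesis by (simp add: vec_eq_iff row one_vec_def)
  qed
  moreover have "1 \<le> 1 \<bullet> z"
  proof -
    fix v
    have "(\<Sum>u\<in>?N v. z $ u) \<le> (\<Sum>u\<in>UNIV. z $ u)"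
      by (rule sum_mono2) (auto simp: z_def)
    then show ?thesis by (simp add: row inner_vec_def one_vec_def)
  qed
  ultimately show thesis by (rule that)
qed

lemma not_cluster_graph_complement:
  assumes "simple_graph F" "cluster_graph F" "\<not> is_complete F" "\<not> is_edgeless F"
  shows "\<not> cluster_graph (complement_graph F)"
proof -
  obtain a b where ab: "a \<noteq> b" "\<not> F a b" using assms(3) by (auto simp: is_complete_def)
  obtain i j where ij: "F i j" using assms(4) by (auto simp: is_edgeless_def)
  have sym: "F u v \<Longrightarrow> F v u" and irrefl: "\<not> F u u" for u v
    using assms(1) by (auto simp: simple_graph_def)
  have tr: "F u v \<Longrightarrow> F v w \<Longrightarrow> u \<noteq> w \<Longrightarrow> F u w" for u v w
    using assms(2) by (auto simp: cluster_graph_def)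
  obtain y where y: "y \<noteq> i" "\<not> F i y"
  proof (cases "a \<noteq> i \<and> \<not> F i a")
    case True
    then show ?thesis using that by blast
  next
    case False
    then have "b \<noteq> i" "\<not> F i b" using ab tr[of a i b] sym by blast+
    then show ?thesis using that by blast
  qed
  have "y \<noteq> j" "\<not> F y j" using ij y tr[of i j y] sym by blast+
  then have "complement_graph F i y" "complement_graph F y j" "\<not> complement_graph F i j" "i \<noteq> j"
    using ij y sym irrefl by (auto simp: complement_graph_def)
  then show ?thesis unfolding cluster_graph_def by blast
qed

lemma adj_matrix_plus_id_test_vector:
  assumes F: "simple_graph F"
  defines "X \<equiv> adj_matrix F + mat 1" and "M \<equiv> id_plus_ones_inv"
  shows "\<exists>z. z \<bullet> (X *v z) < 0 \<or> (X *v z) \<bullet> (M *v (X *v z)) < z \<bullet> (X *v z)"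
proof (cases "cluster_graph F")
  case True
  then obtain z where z: "X *v z = 1" "1 \<le> 1 \<bullet> z"
    using cluster_graph_ones_preimage[OF F] unfolding X_def by blast
  have "(X *v z) \<bullet> (M *v (X *v z)) < 1"
    by (simp add: z(1) M_def inner_one_id_plus_ones_inv_one)
  also have "\<dots> \<le> z \<bullet> (X *v z)" using z by (simp add: inner_commute[of z])
  finally show ?thesis by blast
next
  case False
  then show ?thesis using not_cluster_graph_negative_form[OF F] unfolding X_def by blast
qed

lemma rank_adj_plus_id_add_rank_complement_ge:
  fixes E :: "'n::finite \<Rightarrow> 'n \<Rightarrow> bool"
  assumes E: "simple_graph E" and "\<not> is_complete E" and "\<not> is_edgeless E"
  shows "CARD('n) + 2 \<le>
    rank (adj_matrix E + mat 1) + rank (adj_matrix (complement_graph E) + mat 1)"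
proof -
  let ?X = "adj_matrix E + mat 1" and ?Y = "adj_matrix (complement_graph E) + mat 1"
  note E' = simple_graph_complement[OF E]
  note sym = transpose_adj_matrix_plus_id[OF E] transpose_adj_matrix_plus_id[OF E']
  have inv: "(?X + ?Y) ** id_plus_ones_inv = mat 1" "id_plus_ones_inv ** (?X + ?Y) = mat 1"
    "(?Y + ?X) ** id_plus_ones_inv = mat 1" "id_plus_ones_inv ** (?Y + ?X) = mat 1"
    using id_plus_ones_inv_inverse
    by (simp_all add: adj_matrix_plus_id_add_complement[OF E] add.commute[of ?Y])
  note rank_add_rank = rank_add_rank_ge_card_plus_2[OF _ _ transpose_id_plus_ones_inv _ _
      id_plus_ones_inv_psd]
  consider "\<not> cluster_graph (complement_graph E)" | "\<not> cluster_graph E"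
    using not_cluster_graph_complement assms by blast
  then show ?thesis
  proof cases
    case 1
    obtain w where "w \<bullet> (?Y *v w) < 0" using not_cluster_graph_negative_form[OF E' 1] by blast
    with adj_matrix_plus_id_test_vector[OF E] show ?thesis
      using rank_add_rank[OF sym inv(1,2)] by blast
  next
    case 2
    obtain w where "w \<bullet> (?X *v w) < 0" using not_cluster_graph_negative_form[OF E 2] by blast
    with adj_matrix_plus_id_test_vector[OF E'] have "CARD('n) + 2 \<le> rank ?Y + rank ?X"
      using rank_add_rank[OF sym(2,1) inv(3,4)] by blast
    then show ?thesis by simp
  qed
qed

lemma rank_adj_plus_id_ge_3:
  fixes F :: "'n::finite \<Rightarrow> 'n \<Rightarrow> bool"
  assumes F: "simple_graph F" and "i \<noteq> j" "j \<noteq> k" "i \<noteq> k" "\<not> F i k" "F i j = F j k"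
  shows "3 \<le> rank (adj_matrix F + mat 1)"
proof -
  \<comment> \<open>The principal minor on i, j, k is 1 - [F i j] - [F j k].\<close>
  let ?T = "vector [axis i 1, axis j 1, axis k 1] :: real^'n^3"
  have "F j i = F i j" "F k j = F j k" "\<not> F k i" using F assms by (auto simp: simple_graph_def)
  then have "det (\<chi> a b. ?T $ a \<bullet> ((adj_matrix F + mat 1) *v ?T $ b)) \<noteq> 0"
    using assms unfolding det_3 vec_lambda_beta vector_3 inner_axis_matrix_axis
      adj_matrix_plus_id_entry[OF F]
    by auto
  then show ?thesis using rank_ge_of_det_minor by fastforce
qed

lemma two_cliques_of_alternating:
  assumes sym: "\<And>u v. F u v \<Longrightarrow> F v u" and irrefl: "\<And>u. \<not> F u u"
    and alternate: "\<And>u v w. u \<noteq> v \<Longrightarrow> v \<noteq> w \<Longrightarrow> u \<noteq> w \<Longrightarrow> \<not> F u w \<Longrightarrow> F u v \<longleftrightarrow> \<not> F v w"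
    and ab: "a \<noteq> b" "\<not> F a b"
  shows "\<exists>S. a \<in> S \<and> b \<notin> S \<and> (\<forall>u v. F u v \<longleftrightarrow> u \<noteq> v \<and> (u \<in> S \<longleftrightarrow> v \<in> S))"
proof -
  have trans: "F u w" if "F u v" "F v w" "u \<noteq> w" for u v w
    using alternate[of u v w] that irrefl by auto
  have same_clique: "F x y" if "x = c \<or> F c x" "y = c \<or> F c y" "x \<noteq> y" for c x y
    using that trans[of x c y] sym[of c x] by auto
  have cover: "F b u" if "u \<noteq> a" "\<not> F a u" "u \<noteq> b" for u
    using alternate[of a u b] ab that sym[of u b] by auto
  define S where "S = {u. u = a \<or> F a u}"
  have closed: "v \<in> S" if "F u v" "u \<in> S" for u v
    using that trans[of a u v] unfolding S_def by auto
  have cliques: "F u v \<longleftrightarrow> u \<noteq> v \<and> (u \<in> S \<longleftrightarrow> v \<in> S)" for u v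
  proof
    assume "F u v"
    then show "u \<noteq> v \<and> (u \<in> S \<longleftrightarrow> v \<in> S)"
      using closed[of u v] closed[of v u] sym[of u v] irrefl[of u] by blast
  next
    assume uv: "u \<noteq> v \<and> (u \<in> S \<longleftrightarrow> v \<in> S)"
    show "F u v"
    proof (cases "u \<in> S")
      case True
      then have "u = a \<or> F a u" "v = a \<or> F a v" using uv by (simp_all add: S_def)
      then show ?thesis using uv same_clique[where c = a and x = u and y = v] by blast
    next
      case False
      then have "u = b \<or> F b u" "v = b \<or> F b v"
        using uv cover[of u] cover[of v] by (auto simp: S_def)
      then show ?thesis using uv same_clique[where c = b and x = u and y = v] by blast
    qed
  qed
  moreover have "a \<in> S" "b \<notin> S" using ab by (simp_all add: S_def)
  ultimately show ?thesis by blast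
qed

lemma rank_adj_plus_id_le_2_of_two_cliques:
  fixes F :: "'n::finite \<Rightarrow> 'n \<Rightarrow> bool"
  assumes cliques: "\<And>u v. F u v \<longleftrightarrow> u \<noteq> v \<and> (u \<in> S \<longleftrightarrow> v \<in> S)"
  shows "rank (adj_matrix F + mat 1) \<le> 2"
proof -
  define e1 :: "real^'n" where "e1 = (\<chi> i. if i \<in> S then 1 else 0)"
  define e2 :: "real^'n" where "e2 = (\<chi> i. if i \<in> S then 0 else 1)"
  have entry: "(adj_matrix F + mat 1) $ i $ j = e1 $ i * e1 $ j + e2 $ i * e2 $ j" for i j
    by (simp add: adj_matrix_def mat_def cliques e1_def e2_def)
  have "(adj_matrix F + mat 1) *v z = (e1 \<bullet> z) *\<^sub>R e1 + (e2 \<bullet> z) *\<^sub>R e2" for z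
    unfolding vec_eq_iff matrix_vector_mult_def vec_lambda_beta entry
    by (simp add: inner_vec_def sum.distrib sum_distrib_left algebra_simps)
  then have "range ((*v) (adj_matrix F + mat 1)) \<subseteq> span {e1, e2}"
    by (auto intro!: span_add span_scale simp: span_base)
  then have "rank (adj_matrix F + mat 1) \<le> card {e1, e2}"
    unfolding rank_dim_range by (rule dim_le_card) simp
  also have "\<dots> \<le> 2" by (simp add: card_insert_le_m1)
  finally show ?thesis .
qed

lemma iso_complete_bipartite_of_cut:
  fixes G :: "'n::finite \<Rightarrow> 'n \<Rightarrow> bool"
  assumes cut: "\<And>u v. G u v \<longleftrightarrow> (u \<in> S) \<noteq> (v \<in> S)" and "a \<in> S" "b \<notin> S"
  shows "\<exists>k. 1 \<le> k \<and> k \<le> CARD('n) div 2 \<and> iso_complete_bipartite G k"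
proof -
  have "1 \<le> card S" "1 \<le> card (- S)"
    using assms(2,3) by (auto simp: Suc_le_eq card_gt_0_iff)
  moreover have "card S + card (- S) = CARD('n)"
    by (simp add: Compl_eq_Diff_UNIV card_Diff_subset card_mono)
  moreover have "iso_complete_bipartite G (card S)" "iso_complete_bipartite G (card (- S))"
    using cut unfolding iso_complete_bipartite_def by auto
  ultimately show ?thesis
  proof (cases "card S \<le> CARD('n) div 2")
    case False
    with \<open>card S + card (- S) = CARD('n)\<close> have "card (- S) \<le> CARD('n) div 2" by linarith
    with \<open>1 \<le> card (- S)\<close> \<open>iso_complete_bipartite G (card (- S))\<close> show ?thesis by blast
  qed blast
qed

lemma rank_adj_plus_id_le_2_iff:
  fixes F :: "'n::finite \<Rightarrow> 'n \<Rightarrow> bool"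
  assumes F: "simple_graph F" and "\<not> is_complete F"
  shows "rank (adj_matrix F + mat 1) \<le> 2 \<longleftrightarrow>
    (\<exists>k. 1 \<le> k \<and> k \<le> CARD('n) div 2 \<and> iso_complete_bipartite (complement_graph F) k)"
proof
  assume rank: "rank (adj_matrix F + mat 1) \<le> 2"
  obtain a b where ab: "a \<noteq> b" "\<not> F a b" using assms(2) by (auto simp: is_complete_def)
  have alternate: "F u v \<longleftrightarrow> \<not> F v w" if "u \<noteq> v" "v \<noteq> w" "u \<noteq> w" "\<not> F u w" for u v w
    using rank_adj_plus_id_ge_3[OF F that] rank by linarith
  obtain S where S: "a \<in> S" "b \<notin> S" "\<forall>u v. F u v \<longleftrightarrow> u \<noteq> v \<and> (u \<in> S \<longleftrightarrow> v \<in> S)"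
    using two_cliques_of_alternating[OF _ _ alternate ab] F unfolding simple_graph_def by blast
  then have "complement_graph F u v \<longleftrightarrow> (u \<in> S) \<noteq> (v \<in> S)" for u v
    by (auto simp: complement_graph_def)
  then show "\<exists>k. 1 \<le> k \<and> k \<le> CARD('n) div 2 \<and> iso_complete_bipartite (complement_graph F) k"
    using iso_complete_bipartite_of_cut S(1,2) by blast
next
  assume "\<exists>k. 1 \<le> k \<and> k \<le> CARD('n) div 2 \<and> iso_complete_bipartite (complement_graph F) k"
  then obtain S where "\<And>u v. complement_graph F u v \<longleftrightarrow> (u \<in> S) \<noteq> (v \<in> S)"
    by (auto simp: iso_complete_bipartite_def)
  then have "F u v \<longleftrightarrow> u \<noteq> v \<and> (u \<in> S \<longleftrightarrow> v \<in> S)" for u v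
    using F by (auto simp: complement_graph_def simple_graph_def)
  then show "rank (adj_matrix F + mat 1) \<le> 2" by (rule rank_adj_plus_id_le_2_of_two_cliques)
qed

lemma mult_ge_double_of_add_ge:
  fixes r t n :: nat
  assumes "n + 2 \<le> r + t" "r \<le> n" "t \<le> n"
  shows "2 * n \<le> r * t" and "r * t = 2 * n \<longleftrightarrow> r \<le> 2 \<or> t \<le> 2"
proof -
  define r' t' where "r' = r - 2" and "t' = t - 2"
  have r: "r = r' + 2" and t: "t = t' + 2" unfolding r'_def t'_def using assms by linarith+
  have key: "2 * n + r' * t' \<le> r * t" using assms(1) by (simp add: r t algebra_simps)
  then show "2 * n \<le> r * t" by simp
  show "r * t = 2 * n \<longleftrightarrow> r \<le> 2 \<or> t \<le> 2"
  proof
    assume "r * t = 2 * n"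
    then have "r' * t' = 0" using key by simp
    then show "r \<le> 2 \<or> t \<le> 2" by (simp add: r t)
  next
    assume "r \<le> 2 \<or> t \<le> 2"
    then have "r = 2 \<and> t = n \<or> t = 2 \<and> r = n" using assms r t by linarith
    then show "r * t = 2 * n" by auto
  qed
qed

theorem theorem4p2:
  fixes E :: "'n::finite \<Rightarrow> 'n \<Rightarrow> bool"
  assumes "simple_graph E"
    and "\<not> is_complete E"
    and "\<not> is_edgeless E"
  shows "rank (adj_matrix E + mat 1) * rank (adj_matrix (complement_graph E) + mat 1)
           \<ge> 2 * CARD('n) \<and>
         (rank (adj_matrix E + mat 1) * rank (adj_matrix (complement_graph E) + mat 1)
           = 2 * CARD('n) \<longleftrightarrow>
         (\<exists>a::nat. 1 \<le> a \<and> a \<le> CARD('n) div 2 \<and>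
            (iso_complete_bipartite E a \<or> iso_complete_bipartite (complement_graph E) a)))"
proof -
  let ?r = "rank (adj_matrix E + mat 1)" and ?t = "rank (adj_matrix (complement_graph E) + mat 1)"
  have bounds: "CARD('n) + 2 \<le> ?r + ?t" "?r \<le> CARD('n)" "?t \<le> CARD('n)"
    using rank_adj_plus_id_add_rank_complement_ge[OF assms] rank_bound by (blast, fastforce+)
  have "?r \<le> 2 \<longleftrightarrow>
      (\<exists>a. 1 \<le> a \<and> a \<le> CARD('n) div 2 \<and> iso_complete_bipartite (complement_graph E) a)"
    by (rule rank_adj_plus_id_le_2_iff[OF assms(1,2)])
  moreover have "?t \<le> 2 \<longleftrightarrow> (\<exists>a. 1 \<le> a \<and> a \<le> CARD('n) div 2 \<and> iso_complete_bipartite E a)"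
    using rank_adj_plus_id_le_2_iff[OF simple_graph_complement not_complete_complement_graph]
      complement_complement_graph assms by metis
  ultimately show ?thesis using mult_ge_double_of_add_ge[OF bounds] by blast
qed

end
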